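(* Suppose $\mathcal E$ generates a stochastic process. Then for all $j,j'\in\{0,\dots,n_\tau\}$ with $j'\ge j$, all $x,x'\in\Lambda$ and all $h\in\mathbb R^{\{1,\dots,n_\tau\}\times\Lambda}$, $$\big|\mathcal C(h)_{(j,x),(j',x')}\big|\le\big|\mathcal C(0)_{(j,x),(j',x')}\big|=\big(e^{-(j'-j)\epsilon\mathcal E}\big)_{x,x'} .$$
   Context: $\Lambda$ is a finite discrete torus $\mathbb Z^d/L\mathbb Z^d$ (lattice spacing $1$), operators on $\mathbb C^\Lambda$ are identified with their matrices, and functions on $\Lambda$ act as multiplication operators. $\mathcal E$ is a hermitian operator on $\mathbb C^\Lambda$; it generates a stochastic process if $(e^{-\tau\mathcal E})_{x,y}\ge0$ for all $\tau\ge0$ and $x,y\in\Lambda$. $\beta>0$, $n_\tau\in\mathbb N$, $\epsilon=\beta/n_\tau$. For $h=(h_j)_{j=1}^{n_\tau}$, $h_j\in\mathbb R^\Lambda$, and $h_0:=0$, let $\mathcal Q(h)$ be the block matrix indexed by $j,j'\in\{0,\dots,n_\tau\}$ with $\mathcal Q(h)_{j,j'}=\delta_{j,j'}\mathbf 1-\delta_{j+1,j'}e^{-\epsilon\mathcal E}e^{i\sqrt\epsilon h_{j'}}$ (it is upper triangular with identity diagonal, hence invertible), and $\mathcal C(h)=\mathcal Q(h)^{-1}$ with matrix elements $\mathcal C(h)_{(j,x),(j',x')}$. *)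

theory Defs
  imports "HOL-Analysis.Analysis"
begin

text \<open>The discrete torus Z^d / L Z^d, represented by the canonical representatives
  (integer vectors of length d with entries in 0..L-1).\<close>
definition torus :: "nat \<Rightarrow> int \<Rightarrow> int list set" where
  "torus d L = {x. length x = d \<and> (\<forall>i\<in>set x. 0 \<le> i \<and> i < L)}"

definition is_mat :: "'a set \<Rightarrow> ('a \<Rightarrow> 'a \<Rightarrow> complex) \<Rightarrow> bool" where
  "is_mat S A \<longleftrightarrow> (\<forall>x y. (x \<notin> S \<or> y \<notin> S) \<longrightarrow> A x y = 0)"

definition mat_id :: "'a set \<Rightarrow> 'a \<Rightarrow> 'a \<Rightarrow> complex" where
  "mat_id S x y = (if x \<in> S \<and> y \<in> S \<and> x = y then 1 else 0)"

definition mat_mult :: "'a set \<Rightarrow> ('a \<Rightarrow> 'a \<Rightarrow> complex) \<Rightarrow> ('a \<Rightarrow> 'a \<Rightarrow> complex)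
    \<Rightarrow> 'a \<Rightarrow> 'a \<Rightarrow> complex" where
  "mat_mult S A B x y = (if x \<in> S \<and> y \<in> S then (\<Sum>z\<in>S. A x z * B z y) else 0)"

definition mat_scale :: "complex \<Rightarrow> ('a \<Rightarrow> 'a \<Rightarrow> complex) \<Rightarrow> 'a \<Rightarrow> 'a \<Rightarrow> complex" where
  "mat_scale c A x y = c * A x y"

primrec mat_pow :: "'a set \<Rightarrow> ('a \<Rightarrow> 'a \<Rightarrow> complex) \<Rightarrow> nat \<Rightarrow> 'a \<Rightarrow> 'a \<Rightarrow> complex" where
  "mat_pow S A 0 = mat_id S"
| "mat_pow S A (Suc n) = mat_mult S A (mat_pow S A n)"

definition mat_exp :: "'a set \<Rightarrow> ('a \<Rightarrow> 'a \<Rightarrow> complex) \<Rightarrow> 'a \<Rightarrow> 'a \<Rightarrow> complex" where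
  "mat_exp S A x y = (\<Sum>n. mat_pow S A n x y / of_nat (fact n))"

definition mult_op :: "'a set \<Rightarrow> ('a \<Rightarrow> complex) \<Rightarrow> 'a \<Rightarrow> 'a \<Rightarrow> complex" where
  "mult_op S f x y = (if x \<in> S \<and> y \<in> S \<and> x = y then f x else 0)"

definition mat_inv :: "'a set \<Rightarrow> ('a \<Rightarrow> 'a \<Rightarrow> complex) \<Rightarrow> 'a \<Rightarrow> 'a \<Rightarrow> complex" where
  "mat_inv S A = (THE B. is_mat S B \<and> mat_mult S A B = mat_id S \<and> mat_mult S B A = mat_id S)"

definition hermitian_mat :: "'a set \<Rightarrow> ('a \<Rightarrow> 'a \<Rightarrow> complex) \<Rightarrow> bool" where
  "hermitian_mat S A \<longleftrightarrow> is_mat S A \<and> (\<forall>x\<in>S. \<forall>y\<in>S. A x y = cnj (A y x))"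

definition generates_stochastic :: "'a set \<Rightarrow> ('a \<Rightarrow> 'a \<Rightarrow> complex) \<Rightarrow> bool" where
  "generates_stochastic S E \<longleftrightarrow>
     (\<forall>\<tau>::real. \<tau> \<ge> 0 \<longrightarrow> (\<forall>x\<in>S. \<forall>y\<in>S.
        mat_exp S (mat_scale (complex_of_real (-\<tau>)) E) x y \<in> \<real> \<and>
        0 \<le> Re (mat_exp S (mat_scale (complex_of_real (-\<tau>)) E) x y)))"

text \<open>The block matrix Q(h) on {0..n_tau} x Lambda, with eps = beta / n_tau;
  h j is the field at time slice j (only j = 1..n_tau are used).\<close>
definition Qmat :: "'a set \<Rightarrow> ('a \<Rightarrow> 'a \<Rightarrow> complex) \<Rightarrow> real \<Rightarrow> nat
    \<Rightarrow> (nat \<Rightarrow> 'a \<Rightarrow> real) \<Rightarrow> nat \<times> 'a \<Rightarrow> nat \<times> 'a \<Rightarrow> complex" where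
  "Qmat \<Lambda> E \<epsilon> n h = (\<lambda>(j, x) (j', x').
     if j \<in> {0..n} \<and> j' \<in> {0..n} \<and> x \<in> \<Lambda> \<and> x' \<in> \<Lambda> then
       (if j = j' \<and> x = x' then 1 else 0)
       - (if j + 1 = j' then
            mat_mult \<Lambda> (mat_exp \<Lambda> (mat_scale (complex_of_real (-\<epsilon>)) E))
              (mult_op \<Lambda> (\<lambda>y. exp (\<i> * complex_of_real (sqrt \<epsilon> * h j' y)))) x x'
          else 0)
     else 0)"

definition Cmat :: "'a set \<Rightarrow> ('a \<Rightarrow> 'a \<Rightarrow> complex) \<Rightarrow> real \<Rightarrow> nat
    \<Rightarrow> (nat \<Rightarrow> 'a \<Rightarrow> real) \<Rightarrow> nat \<times> 'a \<Rightarrow> nat \<times> 'a \<Rightarrow> complex" where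
  "Cmat \<Lambda> E \<epsilon> n h = mat_inv ({0..n} \<times> \<Lambda>) (Qmat \<Lambda> E \<epsilon> n h)"

end

theory Submission
  imports Defs
begin

text \<open>Write Q(h) = 1 - N, where N only couples time slice j to slice j + 1, through the
  transfer matrix T_j = exp(-\<epsilon> E) exp(i sqrt \<epsilon> h_j). Hence C(h) = \<Sum>_k N^k is block upper
  triangular with (j, j') block T_(j+1) \<cdots> T_j'. Expanding this product entrywise, the phases
  have modulus one and the entries of exp(-\<epsilon> E) are nonnegative, so the triangle inequality
  bounds every entry by the same product at h = 0, which is exp(-(j' - j) \<epsilon> E) by the
  semigroup property of the exponential.\<close>

subsection \<open>Matrices on a finite index set\<close>

lemma is_mat_mat_mult [simp]: "is_mat S (mat_mult S A B)"
  by (simp add: is_mat_def mat_mult_def)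

lemma is_mat_mat_id [simp]: "is_mat S (mat_id S)"
  by (simp add: is_mat_def mat_id_def)

lemma is_mat_mat_pow [simp]: "is_mat S (mat_pow S A n)"
  by (cases n) auto

lemma mat_pow_eq_0_outside: "x \<notin> S \<or> y \<notin> S \<Longrightarrow> mat_pow S A n x y = 0"
  using is_mat_mat_pow[of S A n] unfolding is_mat_def by blast

lemma is_mat_mat_exp [simp]: "is_mat S (mat_exp S A)"
  by (simp add: is_mat_def mat_exp_def mat_pow_eq_0_outside)

lemma mat_mult_assoc: "mat_mult S (mat_mult S A B) C = mat_mult S A (mat_mult S B C)"
proof (intro ext)
  fix x y
  show "mat_mult S (mat_mult S A B) C x y = mat_mult S A (mat_mult S B C) x y"
  proof (cases "x \<in> S \<and> y \<in> S")
    case True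
    have "(\<Sum>z\<in>S. mat_mult S A B x z * C z y) = (\<Sum>z\<in>S. \<Sum>w\<in>S. A x w * B w z * C z y)"
      using True by (auto simp: mat_mult_def sum_distrib_right intro!: sum.cong)
    also have "\<dots> = (\<Sum>w\<in>S. \<Sum>z\<in>S. A x w * B w z * C z y)"
      by (rule sum.swap)
    also have "\<dots> = (\<Sum>w\<in>S. A x w * mat_mult S B C w y)"
      using True by (auto simp: mat_mult_def sum_distrib_left mult.assoc intro!: sum.cong)
    finally show ?thesis
      using True by (simp add: mat_mult_def)
  qed (auto simp: mat_mult_def)
qed

lemma mat_mult_id_left:
  assumes "finite S" and "is_mat S B"
  shows "mat_mult S (mat_id S) B = B"
proof (intro ext)
  fix x y
  have "(\<Sum>z\<in>S. mat_id S x z * B z y) = (if x \<in> S then B x y else 0)"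
    unfolding mat_id_def using assms(1) by (simp add: if_distrib[of "\<lambda>c. c * _"] cong: if_cong)
  then show "mat_mult S (mat_id S) B x y = B x y"
    using assms(2) by (auto simp: mat_mult_def is_mat_def)
qed

lemma mat_mult_id_right:
  assumes "finite S" and "is_mat S B"
  shows "mat_mult S B (mat_id S) = B"
proof (intro ext)
  fix x y
  have "(\<Sum>z\<in>S. B x z * mat_id S z y) = (if y \<in> S then B x y else 0)"
    unfolding mat_id_def using assms(1) by (simp add: if_distrib[of "\<lambda>c. _ * c"] cong: if_cong)
  then show "mat_mult S B (mat_id S) x y = B x y"
    using assms(2) by (auto simp: mat_mult_def is_mat_def)
qed

lemma mat_inv_eqI:
  assumes "finite S" and "is_mat S B"
    and "mat_mult S A B = mat_id S" and "mat_mult S B A = mat_id S"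
  shows "mat_inv S A = B"
  unfolding mat_inv_def
proof (rule the_equality)
  fix B'
  assume B': "is_mat S B' \<and> mat_mult S A B' = mat_id S \<and> mat_mult S B' A = mat_id S"
  have "B' = mat_mult S B' (mat_mult S A B)"
    using B' assms by (simp add: mat_mult_id_right)
  also have "\<dots> = mat_mult S (mat_mult S B' A) B"
    by (simp add: mat_mult_assoc)
  also have "\<dots> = B"
    using B' assms by (simp add: mat_mult_id_left)
  finally show "B' = B" .
qed (use assms in simp)

lemma mat_pow_add:
  "finite S \<Longrightarrow> mat_pow S A (i + k) = mat_mult S (mat_pow S A i) (mat_pow S A k)"
  by (induct i) (simp_all add: mat_mult_id_left mat_mult_assoc)

lemma mat_mult_scale:
  "mat_mult S (mat_scale c A) (mat_scale d B) = mat_scale (c * d) (mat_mult S A B)"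
  by (auto simp: fun_eq_iff mat_mult_def mat_scale_def sum_distrib_left mult_ac intro!: sum.cong)

lemma mat_pow_scale: "mat_pow S (mat_scale c A) n = mat_scale (c ^ n) (mat_pow S A n)"
proof (induct n)
  case 0
  then show ?case
    by (simp add: mat_scale_def fun_eq_iff)
next
  case (Suc n)
  then show ?case
    by (simp add: mat_mult_scale)
qed

subsection \<open>The matrix exponential\<close>

lemma norm_mat_pow_le:
  assumes "finite S"
  shows "cmod (mat_pow S A n x y) \<le> (\<Sum>u\<in>S. \<Sum>v\<in>S. cmod (A u v)) ^ n"
proof (induct n arbitrary: x y)
  case 0
  then show ?case
    by (simp add: mat_id_def)
next
  case (Suc n)
  let ?B = "\<Sum>u\<in>S. \<Sum>v\<in>S. cmod (A u v)"
  show ?case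
  proof (cases "x \<in> S \<and> y \<in> S")
    case True
    have "cmod (\<Sum>z\<in>S. A x z * mat_pow S A n z y) \<le> (\<Sum>z\<in>S. cmod (A x z) * cmod (mat_pow S A n z y))"
      by (rule order_trans[OF norm_sum]) (simp add: norm_mult)
    also have "\<dots> \<le> (\<Sum>z\<in>S. cmod (A x z) * ?B ^ n)"
      by (intro sum_mono mult_left_mono Suc) auto
    also have "\<dots> = (\<Sum>z\<in>S. cmod (A x z)) * ?B ^ n"
      by (simp add: sum_distrib_right)
    also have "\<dots> \<le> ?B * ?B ^ n"
      using True assms
      by (intro mult_right_mono member_le_sum[where f = "\<lambda>u. \<Sum>v\<in>S. cmod (A u v)"])
         (auto intro!: sum_nonneg zero_le_power)
    finally show ?thesis
      using True by (simp add: mat_mult_def)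
  qed (auto simp: mat_mult_def intro!: sum_nonneg zero_le_power mult_nonneg_nonneg)
qed

lemma summable_norm_mat_exp_series:
  assumes "finite S"
  shows "summable (\<lambda>n. cmod (c ^ n * mat_pow S A n x y / of_nat (fact n)))"
proof -
  define B where "B = (\<Sum>u\<in>S. \<Sum>v\<in>S. cmod (A u v))"
  have "summable (\<lambda>n. (cmod c * B) ^ n /\<^sub>R fact n)"
    by (rule summable_exp_generic)
  then show ?thesis
  proof (rule summable_comparison_test'[where N = 0])
    fix n :: nat
    have "cmod (c ^ n * mat_pow S A n x y / of_nat (fact n))
        = cmod c ^ n * cmod (mat_pow S A n x y) / fact n"
      by (simp add: norm_mult norm_divide norm_power)
    also have "\<dots> \<le> cmod c ^ n * B ^ n / fact n"
      unfolding B_def by (intro divide_right_mono mult_left_mono norm_mat_pow_le assms) auto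
    finally show "norm (cmod (c ^ n * mat_pow S A n x y / of_nat (fact n)))
        \<le> (cmod c * B) ^ n /\<^sub>R fact n"
      by (simp add: power_mult_distrib divide_inverse mult_ac)
  qed
qed

lemma mat_exp_scale_eq_series:
  "mat_exp S (mat_scale c A) x y = (\<Sum>n. c ^ n * mat_pow S A n x y / of_nat (fact n))"
  by (simp add: mat_exp_def mat_pow_scale mat_scale_def)

lemma mat_exp_series_Cauchy_product:
  assumes "finite S" and "x \<in> S" and "y \<in> S"
  shows "(\<Sum>z\<in>S. \<Sum>i\<le>k. (a ^ i * mat_pow S A i x z / of_nat (fact i))
            * (b ^ (k - i) * mat_pow S A (k - i) z y / of_nat (fact (k - i))))
       = (a + b) ^ k * mat_pow S A k x y / of_nat (fact k)"
proof -
  define e where "e = (\<lambda>(c::complex) (n::nat). c ^ n /\<^sub>R fact n)"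
  have "(\<Sum>z\<in>S. \<Sum>i\<le>k. (a ^ i * mat_pow S A i x z / of_nat (fact i))
            * (b ^ (k - i) * mat_pow S A (k - i) z y / of_nat (fact (k - i))))
      = (\<Sum>i\<le>k. e a i * e b (k - i) * (\<Sum>z\<in>S. mat_pow S A i x z * mat_pow S A (k - i) z y))"
    unfolding e_def
    by (subst sum.swap)
       (auto simp: sum_distrib_left scaleR_conv_of_real divide_inverse mult_ac intro!: sum.cong)
  also have "\<dots> = (\<Sum>i\<le>k. e a i * e b (k - i)) * mat_pow S A k x y"
    unfolding sum_distrib_right
  proof (intro sum.cong refl)
    fix i
    assume "i \<in> {..k}"
    then have "mat_pow S A k = mat_mult S (mat_pow S A i) (mat_pow S A (k - i))"
      using mat_pow_add[OF assms(1), of A i "k - i"] by simp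
    then show "e a i * e b (k - i) * (\<Sum>z\<in>S. mat_pow S A i x z * mat_pow S A (k - i) z y)
        = e a i * e b (k - i) * mat_pow S A k x y"
      using assms by (simp add: mat_mult_def)
  qed
  also have "\<dots> = e (a + b) k * mat_pow S A k x y"
    unfolding e_def by (subst exp_series_add_commuting) auto
  finally show ?thesis
    by (simp add: e_def scaleR_conv_of_real divide_inverse mult_ac)
qed

lemma mat_exp_add:
  assumes "finite S"
  shows "mat_mult S (mat_exp S (mat_scale a A)) (mat_exp S (mat_scale b A))
       = mat_exp S (mat_scale (a + b) A)"
proof (intro ext)
  fix x y
  show "mat_mult S (mat_exp S (mat_scale a A)) (mat_exp S (mat_scale b A)) x y
      = mat_exp S (mat_scale (a + b) A) x y"
  proof (cases "x \<in> S \<and> y \<in> S")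
    case True
    let ?f = "\<lambda>c u v n. c ^ n * mat_pow S A n u v / of_nat (fact n)"
    have "(\<lambda>k. \<Sum>z\<in>S. \<Sum>i\<le>k. ?f a x z i * ?f b z y (k - i))
        sums (\<Sum>z\<in>S. (\<Sum>n. ?f a x z n) * (\<Sum>n. ?f b z y n))"
      by (intro sums_sum Cauchy_product_sums summable_norm_mat_exp_series assms)
    moreover have "(\<lambda>k. \<Sum>z\<in>S. \<Sum>i\<le>k. ?f a x z i * ?f b z y (k - i)) = ?f (a + b) x y"
      using True by (intro ext mat_exp_series_Cauchy_product assms) auto
    ultimately have "?f (a + b) x y sums (\<Sum>z\<in>S. (\<Sum>n. ?f a x z n) * (\<Sum>n. ?f b z y n))"
      by simp
    then show ?thesis
      using True by (simp add: mat_exp_scale_eq_series mat_mult_def sums_iff)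
  qed (auto simp: mat_mult_def mat_exp_def mat_pow_eq_0_outside)
qed

lemma mat_exp_scale_0: "mat_exp S (mat_scale 0 A) = mat_id S"
proof (intro ext)
  fix x y
  have "(\<Sum>n. 0 ^ n * mat_pow S A n x y / of_nat (fact n)) = mat_id S x y"
    by (subst suminf_finite[of "{0}"]) auto
  then show "mat_exp S (mat_scale 0 A) x y = mat_id S x y"
    by (simp add: mat_exp_scale_eq_series)
qed

subsection \<open>The inverse of the block matrix \<open>Q(h)\<close>\<close>

definition slice_transfer :: "'a set \<Rightarrow> ('a \<Rightarrow> 'a \<Rightarrow> complex) \<Rightarrow> real \<Rightarrow> (nat \<Rightarrow> 'a \<Rightarrow> real)
    \<Rightarrow> nat \<Rightarrow> 'a \<Rightarrow> 'a \<Rightarrow> complex" where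
  "slice_transfer \<Lambda> E \<epsilon> h k = mat_mult \<Lambda> (mat_exp \<Lambda> (mat_scale (complex_of_real (-\<epsilon>)) E))
     (mult_op \<Lambda> (\<lambda>y. exp (\<i> * complex_of_real (sqrt \<epsilon> * h k y))))"

primrec transfer_prod :: "'a set \<Rightarrow> ('a \<Rightarrow> 'a \<Rightarrow> complex) \<Rightarrow> real \<Rightarrow> (nat \<Rightarrow> 'a \<Rightarrow> real)
    \<Rightarrow> nat \<Rightarrow> nat \<Rightarrow> 'a \<Rightarrow> 'a \<Rightarrow> complex" where
  "transfer_prod \<Lambda> E \<epsilon> h j 0 = mat_id \<Lambda>"
| "transfer_prod \<Lambda> E \<epsilon> h j (Suc m) =
     mat_mult \<Lambda> (transfer_prod \<Lambda> E \<epsilon> h j m) (slice_transfer \<Lambda> E \<epsilon> h (j + Suc m))"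

definition propagator :: "'a set \<Rightarrow> ('a \<Rightarrow> 'a \<Rightarrow> complex) \<Rightarrow> real \<Rightarrow> nat \<Rightarrow> (nat \<Rightarrow> 'a \<Rightarrow> real)
    \<Rightarrow> nat \<times> 'a \<Rightarrow> nat \<times> 'a \<Rightarrow> complex" where
  "propagator \<Lambda> E \<epsilon> n h = (\<lambda>(j, x) (j', x').
     if j \<le> n \<and> j' \<le> n \<and> x \<in> \<Lambda> \<and> x' \<in> \<Lambda> \<and> j \<le> j'
     then transfer_prod \<Lambda> E \<epsilon> h j (j' - j) x x' else 0)"

lemma is_mat_slice_transfer [simp]: "is_mat \<Lambda> (slice_transfer \<Lambda> E \<epsilon> h k)"
  by (simp add: slice_transfer_def)

lemma is_mat_propagator: "is_mat ({0..n} \<times> \<Lambda>) (propagator \<Lambda> E \<epsilon> n h)"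
  by (auto simp: is_mat_def propagator_def)

lemma transfer_prod_Suc_left:
  assumes "finite \<Lambda>"
  shows "transfer_prod \<Lambda> E \<epsilon> h j (Suc m)
       = mat_mult \<Lambda> (slice_transfer \<Lambda> E \<epsilon> h (Suc j)) (transfer_prod \<Lambda> E \<epsilon> h (Suc j) m)"
proof (induct m)
  case 0
  then show ?case
    using assms by (simp add: mat_mult_id_left mat_mult_id_right)
next
  case (Suc m)
  then show ?case
    by (simp add: mat_mult_assoc)
qed

lemma Qmat_eq_slice_transfer:
  "Qmat \<Lambda> E \<epsilon> n h (j, x) (j', x') =
     (if j \<le> n \<and> j' \<le> n \<and> x \<in> \<Lambda> \<and> x' \<in> \<Lambda> then
        (if j = j' \<and> x = x' then 1 else 0)
        - (if j + 1 = j' then slice_transfer \<Lambda> E \<epsilon> h j' x x' else 0)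
      else 0)"
  by (simp add: Qmat_def slice_transfer_def)

lemma Qmat_row_sum:
  assumes "finite \<Lambda>" and "j \<le> n" and "x \<in> \<Lambda>"
  shows "(\<Sum>p\<in>{0..n} \<times> \<Lambda>. Qmat \<Lambda> E \<epsilon> n h (j, x) p * G p)
       = G (j, x) - (if Suc j \<le> n
                     then \<Sum>z\<in>\<Lambda>. slice_transfer \<Lambda> E \<epsilon> h (Suc j) x z * G (Suc j, z) else 0)"
proof -
  have "(\<Sum>p\<in>{0..n} \<times> \<Lambda>. Qmat \<Lambda> E \<epsilon> n h (j, x) p * G p)
      = (\<Sum>k\<in>{0..n}. \<Sum>z\<in>\<Lambda>. (if k = j then if z = x then G (j, x) else 0 else 0)
            - (if k = Suc j then slice_transfer \<Lambda> E \<epsilon> h (Suc j) x z * G (Suc j, z) else 0))"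
    unfolding sum.cartesian_product
    using assms by (intro sum.cong refl) (auto simp: Qmat_eq_slice_transfer left_diff_distrib)
  also have "\<dots> = (\<Sum>k\<in>{0..n}. (if k = j then G (j, x) else 0)
            - (if k = Suc j then \<Sum>z\<in>\<Lambda>. slice_transfer \<Lambda> E \<epsilon> h (Suc j) x z * G (Suc j, z) else 0))"
    using assms by (intro sum.cong refl) (simp add: sum_subtractf)
  also have "\<dots> = G (j, x) - (if Suc j \<le> n
                     then \<Sum>z\<in>\<Lambda>. slice_transfer \<Lambda> E \<epsilon> h (Suc j) x z * G (Suc j, z) else 0)"
    using assms by (simp add: sum_subtractf)
  finally show ?thesis .
qed

lemma Qmat_col_sum:
  assumes "finite \<Lambda>" and "j' \<le> n" and "x' \<in> \<Lambda>"
  shows "(\<Sum>p\<in>{0..n} \<times> \<Lambda>. G p * Qmat \<Lambda> E \<epsilon> n h p (j', x'))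
       = G (j', x') - (if 1 \<le> j'
                       then \<Sum>z\<in>\<Lambda>. G (j' - 1, z) * slice_transfer \<Lambda> E \<epsilon> h j' z x' else 0)"
proof -
  have "(\<Sum>p\<in>{0..n} \<times> \<Lambda>. G p * Qmat \<Lambda> E \<epsilon> n h p (j', x'))
      = (\<Sum>k\<in>{0..n}. \<Sum>z\<in>\<Lambda>. (if k = j' then if z = x' then G (j', x') else 0 else 0)
            - (if k = j' - 1 \<and> 1 \<le> j' then G (k, z) * slice_transfer \<Lambda> E \<epsilon> h j' z x' else 0))"
    unfolding sum.cartesian_product
    using assms by (intro sum.cong refl) (auto simp: Qmat_eq_slice_transfer right_diff_distrib)
  also have "\<dots> = (\<Sum>k\<in>{0..n}. (if k = j' then G (j', x') else 0)
            - (if k = j' - 1 \<and> 1 \<le> j'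
               then \<Sum>z\<in>\<Lambda>. G (j' - 1, z) * slice_transfer \<Lambda> E \<epsilon> h j' z x' else 0))"
    using assms by (intro sum.cong refl) (auto simp: sum_subtractf)
  also have "\<dots> = G (j', x') - (if 1 \<le> j'
                       then \<Sum>z\<in>\<Lambda>. G (j' - 1, z) * slice_transfer \<Lambda> E \<epsilon> h j' z x' else 0)"
    using assms by (simp add: sum_subtractf sum.If_cases)
  finally show ?thesis .
qed

lemma Qmat_mult_propagator:
  assumes "finite \<Lambda>"
  shows "mat_mult ({0..n} \<times> \<Lambda>) (Qmat \<Lambda> E \<epsilon> n h) (propagator \<Lambda> E \<epsilon> n h) = mat_id ({0..n} \<times> \<Lambda>)"
proof (intro ext)
  fix p q :: "nat \<times> 'a"
  obtain j x j' x' where pq: "p = (j, x)" "q = (j', x')"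
    by force
  show "mat_mult ({0..n} \<times> \<Lambda>) (Qmat \<Lambda> E \<epsilon> n h) (propagator \<Lambda> E \<epsilon> n h) p q = mat_id ({0..n} \<times> \<Lambda>) p q"
  proof (cases "j \<le> n \<and> x \<in> \<Lambda> \<and> j' \<le> n \<and> x' \<in> \<Lambda>")
    case True
    then have "mat_mult ({0..n} \<times> \<Lambda>) (Qmat \<Lambda> E \<epsilon> n h) (propagator \<Lambda> E \<epsilon> n h) p q
        = propagator \<Lambda> E \<epsilon> n h (j, x) (j', x')
          - (if Suc j \<le> n then \<Sum>z\<in>\<Lambda>. slice_transfer \<Lambda> E \<epsilon> h (Suc j) x z
                                   * propagator \<Lambda> E \<epsilon> n h (Suc j, z) (j', x') else 0)"
      using assms by (simp add: mat_mult_def pq Qmat_row_sum)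
    also have "\<dots> = mat_id ({0..n} \<times> \<Lambda>) p q"
    proof (cases "j < j'")
      case j_less: True
      then have "transfer_prod \<Lambda> E \<epsilon> h j (j' - j)
          = mat_mult \<Lambda> (slice_transfer \<Lambda> E \<epsilon> h (Suc j)) (transfer_prod \<Lambda> E \<epsilon> h (Suc j) (j' - Suc j))"
        using transfer_prod_Suc_left[OF assms, of E \<epsilon> h j "j' - Suc j"] by (simp add: Suc_diff_Suc)
      then show ?thesis
        using True j_less by (auto simp: propagator_def pq mat_id_def mat_mult_def intro!: sum.cong)
    qed (use True in \<open>auto simp: propagator_def pq mat_id_def\<close>)
    finally show ?thesis .
  qed (auto simp: mat_mult_def mat_id_def pq)
qed

lemma propagator_mult_Qmat:
  assumes "finite \<Lambda>"
  shows "mat_mult ({0..n} \<times> \<Lambda>) (propagator \<Lambda> E \<epsilon> n h) (Qmat \<Lambda> E \<epsilon> n h) = mat_id ({0..n} \<times> \<Lambda>)"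
proof (intro ext)
  fix p q :: "nat \<times> 'a"
  obtain j x j' x' where pq: "p = (j, x)" "q = (j', x')"
    by force
  show "mat_mult ({0..n} \<times> \<Lambda>) (propagator \<Lambda> E \<epsilon> n h) (Qmat \<Lambda> E \<epsilon> n h) p q = mat_id ({0..n} \<times> \<Lambda>) p q"
  proof (cases "j \<le> n \<and> x \<in> \<Lambda> \<and> j' \<le> n \<and> x' \<in> \<Lambda>")
    case True
    then have "mat_mult ({0..n} \<times> \<Lambda>) (propagator \<Lambda> E \<epsilon> n h) (Qmat \<Lambda> E \<epsilon> n h) p q
        = propagator \<Lambda> E \<epsilon> n h (j, x) (j', x')
          - (if 1 \<le> j' then \<Sum>z\<in>\<Lambda>. propagator \<Lambda> E \<epsilon> n h (j, x) (j' - 1, z)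
                                 * slice_transfer \<Lambda> E \<epsilon> h j' z x' else 0)"
      using assms by (simp add: mat_mult_def pq Qmat_col_sum)
    also have "\<dots> = mat_id ({0..n} \<times> \<Lambda>) p q"
    proof (cases "j < j'")
      case j_less: True
      then have "transfer_prod \<Lambda> E \<epsilon> h j (j' - j)
          = mat_mult \<Lambda> (transfer_prod \<Lambda> E \<epsilon> h j (j' - 1 - j)) (slice_transfer \<Lambda> E \<epsilon> h j')"
        using transfer_prod.simps(2)[of \<Lambda> E \<epsilon> h j "j' - 1 - j"] by (simp add: Suc_diff_Suc)
      then show ?thesis
        using True j_less by (auto simp: propagator_def pq mat_id_def mat_mult_def intro!: sum.cong)
    qed (use True in \<open>auto simp: propagator_def pq mat_id_def intro!: sum.neutral\<close>)
    finally show ?thesis .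
  qed (auto simp: mat_mult_def mat_id_def pq)
qed

lemma Cmat_eq_propagator:
  assumes "finite \<Lambda>"
  shows "Cmat \<Lambda> E \<epsilon> n h = propagator \<Lambda> E \<epsilon> n h"
  unfolding Cmat_def using assms
  by (intro mat_inv_eqI Qmat_mult_propagator propagator_mult_Qmat is_mat_propagator) auto

subsection \<open>Entrywise domination by the free propagator\<close>

lemma slice_transfer_zero_field:
  assumes "finite \<Lambda>"
  shows "slice_transfer \<Lambda> E \<epsilon> (\<lambda>_ _. 0) k = mat_exp \<Lambda> (mat_scale (complex_of_real (-\<epsilon>)) E)"
proof -
  have "mult_op \<Lambda> (\<lambda>y. exp (\<i> * complex_of_real (sqrt \<epsilon> * 0))) = mat_id \<Lambda>"
    by (simp add: mult_op_def mat_id_def fun_eq_iff)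
  then show ?thesis
    using assms by (simp add: slice_transfer_def mat_mult_id_right)
qed

lemma transfer_prod_zero_field:
  assumes "finite \<Lambda>"
  shows "transfer_prod \<Lambda> E \<epsilon> (\<lambda>_ _. 0) j m
       = mat_exp \<Lambda> (mat_scale (complex_of_real (- (real m * \<epsilon>))) E)"
proof (induct m)
  case 0
  then show ?case
    by (simp add: mat_exp_scale_0)
next
  case (Suc m)
  have "complex_of_real (- (real m * \<epsilon>)) + complex_of_real (-\<epsilon>)
      = complex_of_real (- (real (Suc m) * \<epsilon>))"
    by (simp add: algebra_simps)
  then show ?case
    using Suc assms by (simp add: slice_transfer_zero_field mat_exp_add)
qed

lemma slice_transfer_entry:
  assumes "finite \<Lambda>" and "z \<in> \<Lambda>" and "y \<in> \<Lambda>"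
  shows "slice_transfer \<Lambda> E \<epsilon> h k z y
       = mat_exp \<Lambda> (mat_scale (complex_of_real (-\<epsilon>)) E) z y * exp (\<i> * complex_of_real (sqrt \<epsilon> * h k y))"
proof -
  have "(\<Sum>w\<in>\<Lambda>. mat_exp \<Lambda> (mat_scale (complex_of_real (-\<epsilon>)) E) z w
                * mult_op \<Lambda> (\<lambda>y. exp (\<i> * complex_of_real (sqrt \<epsilon> * h k y))) w y)
      = (\<Sum>w\<in>\<Lambda>. if w = y then mat_exp \<Lambda> (mat_scale (complex_of_real (-\<epsilon>)) E) z y
                               * exp (\<i> * complex_of_real (sqrt \<epsilon> * h k y)) else 0)"
    using assms by (intro sum.cong) (auto simp: mult_op_def)
  then show ?thesis
    using assms by (simp add: slice_transfer_def mat_mult_def)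
qed

lemma generates_stochastic_entry:
  assumes "generates_stochastic S E" and "\<tau> \<ge> 0" and "x \<in> S" and "y \<in> S"
  shows "Im (mat_exp S (mat_scale (complex_of_real (-\<tau>)) E) x y) = 0"
    and "0 \<le> Re (mat_exp S (mat_scale (complex_of_real (-\<tau>)) E) x y)"
  using assms by (auto simp: generates_stochastic_def complex_is_Real_iff)

lemma norm_transfer_prod_le:
  assumes fin: "finite \<Lambda>" and stoch: "generates_stochastic \<Lambda> E" and "\<epsilon> \<ge> 0"
    and "x \<in> \<Lambda>" and "y \<in> \<Lambda>"
  shows "cmod (transfer_prod \<Lambda> E \<epsilon> h j m x y)
       \<le> Re (mat_exp \<Lambda> (mat_scale (complex_of_real (- (real m * \<epsilon>))) E) x y)"
  using \<open>y \<in> \<Lambda>\<close>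
proof (induct m arbitrary: y)
  case 0
  then show ?case
    using \<open>x \<in> \<Lambda>\<close> by (simp add: mat_exp_scale_0 mat_id_def)
next
  case (Suc m)
  define K where "K = mat_exp \<Lambda> (mat_scale (complex_of_real (-\<epsilon>)) E)"
  define P where "P = mat_exp \<Lambda> (mat_scale (complex_of_real (- (real m * \<epsilon>))) E)"
  have K: "Im (K z y) = 0" "0 \<le> Re (K z y)" if "z \<in> \<Lambda>" for z
    unfolding K_def using generates_stochastic_entry[OF stoch \<open>\<epsilon> \<ge> 0\<close> that Suc.prems] .
  have P: "Im (P x z) = 0" "0 \<le> Re (P x z)" if "z \<in> \<Lambda>" for z
    unfolding P_def using generates_stochastic_entry[OF stoch _ \<open>x \<in> \<Lambda>\<close> that, of "real m * \<epsilon>"] assms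
    by simp_all
  have "cmod (transfer_prod \<Lambda> E \<epsilon> h j (Suc m) x y)
      = cmod (\<Sum>z\<in>\<Lambda>. transfer_prod \<Lambda> E \<epsilon> h j m x z
                    * (K z y * exp (\<i> * complex_of_real (sqrt \<epsilon> * h (j + Suc m) y))))"
    using assms Suc.prems by (simp add: mat_mult_def slice_transfer_entry K_def)
  also have "\<dots> \<le> (\<Sum>z\<in>\<Lambda>. cmod (transfer_prod \<Lambda> E \<epsilon> h j m x z) * cmod (K z y))"
    by (rule order_trans[OF norm_sum]) (simp add: norm_mult)
  also have "\<dots> \<le> (\<Sum>z\<in>\<Lambda>. Re (P x z) * Re (K z y))"
    using Suc.hyps K P by (intro sum_mono mult_mono) (auto simp: P_def cmod_eq_Re)
  also have "\<dots> = Re (mat_mult \<Lambda> P K x y)"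
    using assms Suc.prems K P by (simp add: mat_mult_def Re_sum)
  also have "mat_mult \<Lambda> P K = mat_exp \<Lambda> (mat_scale (complex_of_real (- (real (Suc m) * \<epsilon>))) E)"
    using fin by (simp add: P_def K_def mat_exp_add algebra_simps)
  finally show ?case .
qed

lemma finite_torus: "finite (torus d L)"
proof (rule finite_subset)
  show "torus d L \<subseteq> {xs. set xs \<subseteq> {0..<L} \<and> length xs = d}"
    by (auto simp: torus_def)
  show "finite {xs. set xs \<subseteq> {0..<L} \<and> length xs = d}"
    by (rule finite_lists_length_eq) simp
qed

theorem lemma6p1:
  fixes d :: nat and L :: int and E :: "int list \<Rightarrow> int list \<Rightarrow> complex"
    and \<beta> :: real and n\<^sub>\<tau> :: nat and h :: "nat \<Rightarrow> int list \<Rightarrow> real"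
    and j j' :: nat and x x' :: "int list"
  assumes "L \<ge> 1"
    and "hermitian_mat (torus d L) E"
    and "generates_stochastic (torus d L) E"
    and "\<beta> > 0" and "n\<^sub>\<tau> \<ge> 1"
    and "j \<le> n\<^sub>\<tau>" and "j' \<le> n\<^sub>\<tau>" and "j \<le> j'"
    and "x \<in> torus d L" and "x' \<in> torus d L"
  shows "cmod (Cmat (torus d L) E (\<beta> / real n\<^sub>\<tau>) n\<^sub>\<tau> h (j, x) (j', x'))
           \<le> cmod (Cmat (torus d L) E (\<beta> / real n\<^sub>\<tau>) n\<^sub>\<tau> (\<lambda>_ _. 0) (j, x) (j', x'))
       \<and> Cmat (torus d L) E (\<beta> / real n\<^sub>\<tau>) n\<^sub>\<tau> (\<lambda>_ _. 0) (j, x) (j', x')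
           = mat_exp (torus d L)
               (mat_scale (complex_of_real (- (real (j' - j) * (\<beta> / real n\<^sub>\<tau>)))) E) x x'"
proof -
  define \<Lambda> \<epsilon> where "\<Lambda> = torus d L" and "\<epsilon> = \<beta> / real n\<^sub>\<tau>"
  define K where "K = mat_exp \<Lambda> (mat_scale (complex_of_real (- (real (j' - j) * \<epsilon>))) E) x x'"
  have fin: "finite \<Lambda>" and stoch: "generates_stochastic \<Lambda> E" and eps: "\<epsilon> \<ge> 0"
    and xs: "x \<in> \<Lambda>" "x' \<in> \<Lambda>"
    using assms by (simp_all add: \<Lambda>_def \<epsilon>_def finite_torus)
  have C: "Cmat \<Lambda> E \<epsilon> n\<^sub>\<tau> g (j, x) (j', x') = transfer_prod \<Lambda> E \<epsilon> g j (j' - j) x x'" for g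
    unfolding Cmat_eq_propagator[OF fin] using assms by (simp add: propagator_def \<Lambda>_def)
  have C0: "Cmat \<Lambda> E \<epsilon> n\<^sub>\<tau> (\<lambda>_ _. 0) (j, x) (j', x') = K"
    by (simp add: C transfer_prod_zero_field[OF fin] K_def)
  have "cmod (Cmat \<Lambda> E \<epsilon> n\<^sub>\<tau> h (j, x) (j', x')) \<le> Re K"
    unfolding C K_def by (rule norm_transfer_prod_le[OF fin stoch eps xs])
  also have "Re K = cmod K"
    using generates_stochastic_entry[OF stoch _ xs, of "real (j' - j) * \<epsilon>"] eps
    by (simp add: K_def cmod_eq_Re)
  finally show ?thesis
    using C0 unfolding K_def \<Lambda>_def \<epsilon>_def by simp
qed

end
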